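(* Let $B$ be a commutative ring with identity and $A$ a dense subring of $B$. If $P,Q$ are prime ideals of $B$ with $P\cap A\subseteq Q\cap A$, then $P\subseteq Q$.
   Context: All rings are commutative with identity; subrings contain the identity. A subring $A$ of $B$ is dense in $B$ if for every ideal $I$ of $B$ and every $b\in B\setminus \operatorname{rad}(I)$ there exists $a\in B\setminus\operatorname{rad}(I)$ with $ab\in A$. *)

theory Defs
  imports "HOL-Algebra.Algebra"
begin

definition ideal_radical :: "('a, 'b) ring_scheme \<Rightarrow> 'a set \<Rightarrow> 'a set" where
  "ideal_radical R I = {x \<in> carrier R. \<exists>n::nat. x [^]\<^bsub>R\<^esub> n \<in> I}"

text \<open>Density of a subset A in the ring B (paper's definition; the subring
  property is assumed separately).\<close>
definition dense_in :: "'a set \<Rightarrow> ('a, 'b) ring_scheme \<Rightarrow> bool" where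
  "dense_in A B \<longleftrightarrow>
     (\<forall>I. ideal I B \<longrightarrow>
        (\<forall>b \<in> carrier B - ideal_radical B I.
           \<exists>a \<in> carrier B - ideal_radical B I. a \<otimes>\<^bsub>B\<^esub> b \<in> A))"

end

theory Submission
  imports Defs
begin

lemma (in primeideal) mem_of_nat_pow_mem:
  assumes "x \<in> carrier R" and "x [^] (n::nat) \<in> I"
  shows "x \<in> I"
  using assms(2)
proof (induction n)
  case 0
  then show ?case
    using I_notcarr one_imp_carrier by simp
next
  case (Suc n)
  then show ?case
    using I_prime[of "x [^] n" x] assms(1) by auto
qed

lemma (in primeideal) ideal_radical_eq:
  "ideal_radical R I = I"
proof
  show "ideal_radical R I \<subseteq> I"
    using mem_of_nat_pow_mem unfolding ideal_radical_def by blast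
  show "I \<subseteq> ideal_radical R I"
    unfolding ideal_radical_def
  proof safe
    fix x assume "x \<in> I"
    then show "x \<in> carrier R" and "\<exists>n::nat. x [^] n \<in> I"
      using Icarr by (auto intro!: exI[of _ "1::nat"])
  qed
qed

theorem lemma3p5:
  fixes B (structure) and A P Q :: "'a set"
  assumes "cring B"
    and "subring A B"
    and "dense_in A B"
    and "primeideal P B"
    and "primeideal Q B"
    and "P \<inter> A \<subseteq> Q \<inter> A"
  shows "P \<subseteq> Q"
proof
  fix b assume "b \<in> P"
  show "b \<in> Q"
  proof (rule ccontr)
    assume "b \<notin> Q"
    have radQ: "ideal_radical B Q = Q"
      using assms(5) by (rule primeideal.ideal_radical_eq)
    have P: "ideal P B"
      using assms(4) by (rule primeideal.axioms(1))
    have b: "b \<in> carrier B"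
      using ideal.Icarr[OF P \<open>b \<in> P\<close>] .
    obtain a where a: "a \<in> carrier B" "a \<notin> Q" and "a \<otimes> b \<in> A"
      using assms(3) assms(5) b \<open>b \<notin> Q\<close> radQ
      unfolding dense_in_def primeideal_def by blast
    have "a \<otimes> b \<in> P"
      using ideal.I_l_closed[OF P \<open>b \<in> P\<close> a(1)] .
    with \<open>a \<otimes> b \<in> A\<close> assms(6) have "a \<otimes> b \<in> Q" by blast
    then show False
      using primeideal.I_prime[OF assms(5) a(1) b] a(2) \<open>b \<notin> Q\<close> by blast
  qed
qed

end
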